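(* In the setting described in the context, assume $\varphi_2^{(\tau)}=\dots=\varphi_{n-1}^{(\tau)}=0$ for all $\tau\in T$ and that each $\varphi_1^{(\tau)}$ depends only on $x_n$ and is a group homomorphism $U_n/U_{n-1}\to U_1$ (i.e. $x_n\mapsto\varphi_1^{(\tau)}(x_n)$ is additive). Then there exists a bi-regular section $\sigma:U_n/U_{n-1}\to U_n$ of the projection $U_n\to U_n/U_{n-1}$ of the form $\sigma(x_nU_{n-1})=(f(x_n),0,\dots,0,x_n)$ with $f\in\mathsf k[\mathrm T]$ additive (i.e. $\delta^1(f)=0$, where $\delta^1(f)(x,y)=f(x)+f(y)-f(x+y)$), such that $\sigma(U_n/U_{n-1})$ is invariant under $T$.
   Context: Let $\mathsf k$ be an algebraically closed field and $G=U\rtimes T$ the semidirect product of an $n$-dimensional connected unipotent algebraic group $U$ by a $1$-dimensional connected torus $T$. Assume $U$ is identified with the affine space $\mathsf k^n$ so that: the subsets $U_i=\{(x_1,\dots,x_n): x_{i+1}=\dots=x_n=0\}$ ($0\le i\le n$) are normal subgroups of $G$; the product is $(x_1,\dots,x_n)(y_1,\dots,y_n)=(x_1+y_1+\psi_1,\ \dots,\ x_{n-1}+y_{n-1}+\psi_{n-1},\ x_n+y_n)$ where $\psi_j\in\mathsf k[x_{j+1},\dots,x_n,y_{j+1},\dots,y_n]$; and each $\tau\in T$ acts on $U$ by the automorphism $(x_1,\dots,x_n)\mapsto(a_\tau^{e_1}x_1+\varphi_1^{(\tau)}(x_2,\dots,x_n),\ \dots,\ a_\tau^{e_{n-1}}x_{n-1}+\varphi^{(\tau)}_{n-1}(x_n),\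 a_\tau^{e_n}x_n)$, where $a_\tau\in\mathsf k^*$ depends bi-regularly on $\tau$, each $\varphi^{(\tau)}_j$ is a morphism (polynomial in $x_{j+1},\dots,x_n$), and the $e_j$ are fixed integers. $U_n/U_{n-1}$ is identified with $\mathsf k$ via the coordinate $x_n$. *)

theory Defs
  imports "HOL-Algebra.Coset" "HOL-Computational_Algebra.Polynomial"
begin

inductive poly_fun :: "'v set \<Rightarrow> (('v \<Rightarrow> 'k::comm_ring_1) \<Rightarrow> 'k) \<Rightarrow> bool" for V where
  pf_const: "poly_fun V (\<lambda>_. c)"
| pf_var: "v \<in> V \<Longrightarrow> poly_fun V (\<lambda>z. z v)"
| pf_add: "poly_fun V p \<Longrightarrow> poly_fun V q \<Longrightarrow> poly_fun V (\<lambda>z. p z + q z)"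
| pf_mult: "poly_fun V p \<Longrightarrow> poly_fun V q \<Longrightarrow> poly_fun V (\<lambda>z. p z * q z)"

text \<open>U = k^n: points are functions nat => k supported on {1..n}.\<close>
definition Uset :: "nat \<Rightarrow> (nat \<Rightarrow> 'k::field) set" where
  "Uset n = {x. \<forall>i. (i = 0 \<or> n < i) \<longrightarrow> x i = 0}"

definition Usub :: "nat \<Rightarrow> nat \<Rightarrow> (nat \<Rightarrow> 'k::field) set" where
  "Usub n i = {x \<in> Uset n. \<forall>j. i < j \<longrightarrow> x j = 0}"

definition Umult :: "nat \<Rightarrow> (nat \<Rightarrow> (nat \<Rightarrow> 'k) \<Rightarrow> (nat \<Rightarrow> 'k) \<Rightarrow> 'k)
    \<Rightarrow> (nat \<Rightarrow> 'k::field) \<Rightarrow> (nat \<Rightarrow> 'k) \<Rightarrow> (nat \<Rightarrow> 'k)" where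
  "Umult n \<psi> x y = (\<lambda>j. if 1 \<le> j \<and> j < n then x j + y j + \<psi> j x y
                        else if j = n then x j + y j else 0)"

definition Ugrp :: "nat \<Rightarrow> (nat \<Rightarrow> (nat \<Rightarrow> 'k) \<Rightarrow> (nat \<Rightarrow> 'k) \<Rightarrow> 'k) \<Rightarrow> (nat \<Rightarrow> 'k::field)
    \<Rightarrow> (nat \<Rightarrow> 'k) monoid" where
  "Ugrp n \<psi> e = \<lparr>carrier = Uset n, monoid.mult = Umult n \<psi>, one = e\<rparr>"

definition psi_poly :: "nat \<Rightarrow> nat \<Rightarrow> ((nat \<Rightarrow> 'k) \<Rightarrow> (nat \<Rightarrow> 'k) \<Rightarrow> 'k::field) \<Rightarrow> bool" where
  "psi_poly n j p \<longleftrightarrow>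
     poly_fun (Inl ` {j<..n} \<union> Inr ` {j<..n}) (\<lambda>z. p (\<lambda>i. z (Inl i)) (\<lambda>i. z (Inr i)))"

text \<open>The torus T is identified with k^* via a_tau (a bi-regular isomorphism), so
  tau is parametrised by a \<noteq> 0.  phi_j^(tau)(x_(j+1..n)) is required to be a regular
  function of (tau, x) on k^* x k^n depending only on x_(j+1..n), i.e. of the form
  P(a, x_(j+1..n)) / a^m with P polynomial.\<close>
definition phi_regular :: "nat \<Rightarrow> nat \<Rightarrow> ('k \<Rightarrow> (nat \<Rightarrow> 'k) \<Rightarrow> 'k::field) \<Rightarrow> bool" where
  "phi_regular n j p \<longleftrightarrow> (\<exists>P m. poly_fun (insert None (Some ` {j<..n})) P \<and>
     (\<forall>a x. a \<noteq> 0 \<longrightarrow> p a x = P (\<lambda>v. case v of None \<Rightarrow> a | Some i \<Rightarrow> x i) / a ^ m))"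

definition act :: "nat \<Rightarrow> (nat \<Rightarrow> int) \<Rightarrow> (nat \<Rightarrow> 'k \<Rightarrow> (nat \<Rightarrow> 'k) \<Rightarrow> 'k)
    \<Rightarrow> 'k::field \<Rightarrow> (nat \<Rightarrow> 'k) \<Rightarrow> (nat \<Rightarrow> 'k)" where
  "act n e \<phi> a x = (\<lambda>j. if 1 \<le> j \<and> j < n then a powi e j * x j + \<phi> j a x
                         else if j = n then a powi e n * x n else 0)"

definition sect :: "nat \<Rightarrow> 'k::field poly \<Rightarrow> 'k \<Rightarrow> (nat \<Rightarrow> 'k)" where
  "sect n f t = (\<lambda>j. if j = n then t else if j = 1 then poly f t else 0)"

end

theory Submission
  imports Defs
begin

(* Restricted to the coordinate axis t |-> (0,...,0,t), the function
   phi_1 becomes g(a,t), a polynomial in t whose coefficients are Laurent polynomials in a.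
   Since tau |-> a_tau is a homomorphism, the action law gives the twisted cocycle identity
     g(ab,t) = a^e_1 g(b,t) + g(a, b^e_n t),
   which splits into one identity c_l(ab) = a^e_1 c_l(b) + c_l(a) b^(e_n l) per coefficient.
   Each such Laurent cocycle is a coboundary c_l(a) = d_l (a^(e_n l) - a^e_1): comparing the
   identity with its mirror image (a and b swapped) gives this whenever the bracket does not
   vanish identically, and otherwise c_l is a twisted homomorphism, which is zero because a
   Laurent polynomial cannot be one.  Hence g(a,t) = f(a^e_n t) - a^e_1 f(t) for
   f = sum_l d_l T^l; additivity of g(a,_) forces f to be additive, and the identity for g
   says exactly that tau maps (f(t),0,...,0,t) to (f(a^e_n t),0,...,0,a^e_n t). *)

text \<open>An algebraically closed field is infinite: otherwise 1 + prod_x (X - x) had no root.\<close>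
lemma alg_closed_infinite: "infinite (UNIV :: 'k::alg_closed_field set)"
proof
  assume fin: "finite (UNIV::'k set)"
  define q where "q = (\<Prod>x\<in>(UNIV::'k set). [:-x,1:])"
  have deg_q: "degree q = card (UNIV::'k set)"
    unfolding q_def by (subst degree_prod_eq_sum_degree) auto
  have card_pos: "card (UNIV::'k set) > 0" using fin by (simp add: card_gt_0_iff)
  hence "degree (q + 1) = card (UNIV::'k set)"
    by (subst degree_add_eq_left) (auto simp: deg_q)
  then obtain x where "poly (q + 1) x = 0"
    using alg_closed_imp_poly_has_root[of "q + 1"] card_pos by auto
  moreover have "poly q x = 0" unfolding q_def poly_prod
    using fin by (intro prod_zero) auto
  ultimately show False by simp
qed

lemma poly_vanishing_on_units:
  fixes p :: "'k::alg_closed_field poly"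
  assumes "\<And>a. a \<noteq> 0 \<Longrightarrow> poly p a = 0"
  shows "p = 0"
proof (rule ccontr)
  assume "p \<noteq> 0"
  then have "finite {a. poly p a = 0}" by (rule poly_roots_finite)
  moreover have "UNIV - {0} \<subseteq> {a. poly p a = 0}" using assms by auto
  ultimately have "finite (UNIV - {0::'k})" by (rule finite_subset[rotated])
  then have "finite (UNIV :: 'k set)" by simp
  with alg_closed_infinite show False by blast
qed

lemma coeffs_vanishing_on_units:
  fixes w :: "nat \<Rightarrow> 'k::alg_closed_field"
  assumes "\<And>a. a \<noteq> 0 \<Longrightarrow> (\<Sum>i\<le>D. w i * a^i) = 0" and "j \<le> D"
  shows "w j = 0"
proof -
  define p where "p = (\<Sum>i\<le>D. monom (w i) i)"
  have "poly p a = (\<Sum>i\<le>D. w i * a^i)" for a by (simp add: p_def poly_sum poly_monom)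
  with assms(1) have "p = 0" by (intro poly_vanishing_on_units) simp
  then have "coeff p j = 0" by simp
  then show ?thesis using assms(2) by (simp add: p_def coeff_sum coeff_monom)
qed

definition axis :: "nat \<Rightarrow> 'k::zero \<Rightarrow> nat \<Rightarrow> 'k" where
  "axis n t = (\<lambda>i. if i = n then t else 0)"

lemma axis_in_Uset: "1 \<le> n \<Longrightarrow> axis n t \<in> Uset n"
  by (auto simp: axis_def Uset_def)

lemma poly_fun_on_axis:
  assumes "poly_fun V P"
  shows "\<exists>Q :: 'k::field poly poly. \<forall>a t.
     P (\<lambda>v. case v of None \<Rightarrow> a | Some i \<Rightarrow> axis n t i) = poly (poly Q [:t:]) a"
  using assms
proof induction
  case (pf_const c) show ?case by (rule exI[of _ "[:[:c:]:]"]) simp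
next
  case (pf_var v) show ?case
  proof (cases v)
    case None then show ?thesis by (intro exI[of _ "[:[:0,1:]:]"]) simp
  next
    case (Some i) then show ?thesis
      by (intro exI[of _ "if i = n then [:0,1:] else 0"]) (simp add: axis_def)
  qed
next
  case (pf_add p q)
  then obtain Q1 Q2 where
    "\<forall>a t. p (\<lambda>v. case v of None \<Rightarrow> a | Some i \<Rightarrow> axis n t i) = poly (poly Q1 [:t:]) a"
    "\<forall>a t. q (\<lambda>v. case v of None \<Rightarrow> a | Some i \<Rightarrow> axis n t i) = poly (poly Q2 [:t:]) a"
    by blast
  then show ?case by (intro exI[of _ "Q1 + Q2"]) simp
next
  case (pf_mult p q)
  then obtain Q1 Q2 where
    "\<forall>a t. p (\<lambda>v. case v of None \<Rightarrow> a | Some i \<Rightarrow> axis n t i) = poly (poly Q1 [:t:]) a"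
    "\<forall>a t. q (\<lambda>v. case v of None \<Rightarrow> a | Some i \<Rightarrow> axis n t i) = poly (poly Q2 [:t:]) a"
    by blast
  then show ?case by (intro exI[of _ "Q1 * Q2"]) simp
qed

lemma phi_regular_on_axis:
  fixes p :: "'k::field \<Rightarrow> (nat \<Rightarrow> 'k) \<Rightarrow> 'k"
  assumes "phi_regular n j p"
  shows "\<exists>R m D. \<forall>a t. a \<noteq> 0 \<longrightarrow> p a (axis n t) = (\<Sum>l\<le>D. poly (R l) a / a^m * t^l)"
proof -
  obtain P m where P: "poly_fun (insert None (Some ` {j<..n})) P"
    and p: "\<forall>a x. a \<noteq> 0 \<longrightarrow> p a x = P (\<lambda>v. case v of None \<Rightarrow> a | Some i \<Rightarrow> x i) / a^m"
    using assms unfolding phi_regular_def by blast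
  obtain Q :: "'k poly poly" where
    Q: "\<forall>a t. P (\<lambda>v. case v of None \<Rightarrow> a | Some i \<Rightarrow> axis n t i) = poly (poly Q [:t:]) a"
    using poly_fun_on_axis[OF P, where n = n] by blast
  have "p a (axis n t) = (\<Sum>l\<le>degree Q. poly (coeff Q l) a / a^m * t^l)" if "a \<noteq> 0" for a t
  proof -
    have "p a (axis n t) = poly (poly Q [:t:]) a / a^m" using p Q that by simp
    also have "\<dots> = (\<Sum>l\<le>degree Q. poly (coeff Q l) a * t^l) / a^m"
      by (subst poly_altdef[of Q]) (simp add: poly_sum poly_power)
    finally show ?thesis by (simp add: sum_divide_distrib)
  qed
  then show ?thesis by blast
qed

text \<open>Clearing
  denominators turns the identity in a (for fixed b) into a polynomial identity whose
  coefficient at the degree of a^E exhibits c(b) = 0.\<close>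
lemma laurent_twisted_hom_zero:
  fixes c :: "'k::alg_closed_field \<Rightarrow> 'k" and R :: "'k poly" and m :: nat and E :: int
  assumes rep: "\<And>a. a \<noteq> 0 \<Longrightarrow> c a = poly R a / a^m"
  and hom: "\<And>a b. a \<noteq> 0 \<Longrightarrow> b \<noteq> 0 \<Longrightarrow> c (a*b) = a powi E * c b + c a * b powi E"
  and b: "b \<noteq> 0"
  shows "c b = 0"
proof -
  define k where "k = E + int m"
  define N where "N = nat (- k)"
  define K where "K = nat (k + int N)"
  have EK: "E + int m + int N = int K" by (simp add: K_def N_def k_def)
  define Pp where "Pp = smult (inverse (b^m)) (monom 1 N * (R \<circ>\<^sub>p [:0,b:]))
      - smult (b powi E) (monom 1 N * R) - monom (c b) K"
  have "Pp = 0"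
  proof (rule poly_vanishing_on_units)
    fix a :: 'k assume a: "a \<noteq> 0"
    define X where "X = a powi E * c b + poly R a / a^m * b powi E"
    have "poly R (a*b) / (a*b)^m = X"
      using hom[OF a b] rep[OF a] rep[of "a*b"] a b unfolding X_def by simp
    then have R_ab: "poly R (a*b) = X * (a^m * b^m)"
      using a b by (simp add: divide_eq_eq power_mult_distrib)
    have pw: "a powi E * a^m * a^N = a^K"
    proof -
      have "a powi E * a^m * a^N = a powi (E + int m + int N)"
        using a by (simp add: power_int_add)
      also have "\<dots> = a^K" by (simp add: EK)
      finally show ?thesis .
    qed
    have "poly R (a*b) * a^N / b^m = X * a^m * a^N" using b R_ab by simp
    also have "\<dots> = (a powi E * a^m * a^N) * c b + poly R a * a^N * b powi E"
      using a unfolding X_def by (simp add: distrib_right)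
    also have "\<dots> = a^K * c b + poly R a * a^N * b powi E" by (simp only: pw)
    finally have cleared: "poly R (a*b) * a^N / b^m = a^K * c b + poly R a * a^N * b powi E" .
    have "poly Pp a = inverse (b^m) * (a^N * poly R (a*b)) - b powi E * (a^N * poly R a) - c b * a^K"
      by (simp add: Pp_def poly_pcompose poly_monom mult.commute)
    also have "\<dots> = 0" using cleared by (simp add: divide_inverse algebra_simps)
    finally show "poly Pp a = 0" .
  qed
  hence coeff_K: "coeff Pp K = 0" by simp
  show ?thesis
  proof (cases "k < 0")
    case True
    hence "K < N" by (simp add: K_def N_def)
    with coeff_K show ?thesis by (simp add: Pp_def coeff_monom_mult)
  next
    case False
    hence N0: "N = 0" and KK: "int K = k" by (auto simp: K_def N_def)
    have bK: "b^K = b powi E * b^m"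
    proof -
      have "b^K = b powi (E + int m)" using KK by (simp add: k_def flip: power_int_of_nat)
      thus ?thesis using b by (simp add: power_int_add)
    qed
    have "coeff Pp K = inverse (b^m) * (b^K * coeff R K) - b powi E * coeff R K - c b"
      by (simp add: Pp_def coeff_monom_mult coeff_pcompose_linear N0)
    also have "\<dots> = - c b" using b by (simp add: bK)
    finally show ?thesis using coeff_K by simp
  qed
qed

lemma laurent_twisted_cocycle_coboundary:
  fixes c :: "'k::alg_closed_field \<Rightarrow> 'k" and E F :: int
  assumes rep: "\<And>a. a \<noteq> 0 \<Longrightarrow> c a = poly R a / a^m"
  and coc: "\<And>a b. a \<noteq> 0 \<Longrightarrow> b \<noteq> 0 \<Longrightarrow> c (a*b) = a powi E * c b + c a * b powi F"
  shows "\<exists>d. (\<forall>a. a \<noteq> 0 \<longrightarrow> c a = d * (a powi F - a powi E)) \<and>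
             (d \<noteq> 0 \<longrightarrow> (\<exists>a::'k. a \<noteq> 0 \<and> a powi F \<noteq> a powi E))"
proof (cases "\<exists>b::'k. b \<noteq> 0 \<and> b powi F \<noteq> b powi E")
  case True
  then obtain b :: 'k where b0: "b \<noteq> 0" and "b powi F \<noteq> b powi E" by blast
  then have b_bracket: "b powi F - b powi E \<noteq> 0" by simp
  define d where "d = c b / (b powi F - b powi E)"
  have "c a = d * (a powi F - a powi E)" if a: "a \<noteq> 0" for a
  proof -
    have "c (a*b) = c (b*a)" by (simp only: mult.commute)
    then have "c a * (b powi F - b powi E) = c b * (a powi F - a powi E)"
      using coc[OF a b0] coc[OF b0 a] by (simp add: algebra_simps)
    then show ?thesis using b_bracket by (simp add: d_def eq_divide_eq)
  qed
  moreover have "\<exists>a::'k. a \<noteq> 0 \<and> a powi F \<noteq> a powi E" using True .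
  ultimately show ?thesis by blast
next
  case False
  have "c a = 0" if "a \<noteq> 0" for a
  proof (rule laurent_twisted_hom_zero[OF rep _ that])
    fix x y :: 'k assume xy: "x \<noteq> 0" "y \<noteq> 0"
    have "y powi F = y powi E" using False xy(2) by blast
    then show "c (x*y) = x powi E * c y + c x * y powi E" using coc[OF xy] by simp
  qed
  then show ?thesis by (intro exI[of _ 0]) auto
qed

lemma coefficient_cocycle:
  fixes g :: "'k::alg_closed_field \<Rightarrow> 'k \<Rightarrow> 'k" and E F :: int
  assumes expand: "\<And>a t. a \<noteq> 0 \<Longrightarrow> g a t = (\<Sum>l\<le>D. c l a * t^l)"
  and coc: "\<And>a b t. a \<noteq> 0 \<Longrightarrow> b \<noteq> 0 \<Longrightarrow> g (a*b) t = a powi E * g b t + g a (b powi F * t)"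
  and a: "a \<noteq> 0" and b: "b \<noteq> 0" and l: "l \<le> D"
  shows "c l (a*b) = a powi E * c l b + c l a * b powi (F * int l)"
proof -
  have ab: "a * b \<noteq> 0" using a b by simp
  have "(\<Sum>l\<le>D. (c l (a*b) - a powi E * c l b - c l a * (b powi F)^l) * t^l) = 0" for t
  proof -
    have "(\<Sum>l\<le>D. (c l (a*b) - a powi E * c l b - c l a * (b powi F)^l) * t^l)
        = g (a*b) t - a powi E * g b t - g a (b powi F * t)"
      unfolding expand[OF ab] expand[OF a] expand[OF b]
      by (simp add: algebra_simps sum_subtractf sum_distrib_left power_mult_distrib sum.distrib)
    also have "\<dots> = 0" using coc[OF a b] by simp
    finally show ?thesis .
  qed
  from coeffs_vanishing_on_units[OF this l] show ?thesis
    by (simp add: power_int_power' algebra_simps)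
qed

text \<open>If h(a,t) = sum_l d_l (a^(F l) - a^E) t^l is additive in t for every unit a, then
  f = sum_l d_l T^l is additive: each monomial with d_l \<noteq> 0 has a unit a with nonzero bracket,
  and additivity of h(a,_) on the line s |-> s x, s y, s (x + y) isolates its coefficient.\<close>
lemma additive_of_additive_coboundary:
  fixes d :: "nat \<Rightarrow> 'k::alg_closed_field" and h :: "'k \<Rightarrow> 'k \<Rightarrow> 'k" and E F :: int
  assumes h: "\<And>a t. a \<noteq> 0 \<Longrightarrow> h a t = (\<Sum>l\<le>D. d l * (a powi (F * int l) - a powi E) * t^l)"
  and add: "\<And>a s t. a \<noteq> 0 \<Longrightarrow> h a (s + t) = h a s + h a t"
  and nondeg: "\<And>l. l \<le> D \<Longrightarrow> d l \<noteq> 0 \<Longrightarrow> \<exists>a::'k. a \<noteq> 0 \<and> a powi (F * int l) \<noteq> a powi E"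
  shows "poly (\<Sum>l\<le>D. monom (d l) l) x + poly (\<Sum>l\<le>D. monom (d l) l) y
           - poly (\<Sum>l\<le>D. monom (d l) l) (x + y) = 0"
proof -
  define B where "B l a = a powi (F * int l) - a powi E" for l and a :: 'k
  have monomial: "d l * (x^l + y^l - (x+y)^l) = 0" if l: "l \<le> D" for l
  proof (cases "d l = 0")
    case False
    then obtain a :: 'k where a0: "a \<noteq> 0" and "a powi (F * int l) \<noteq> a powi E"
      using nondeg[OF l] by blast
    then have a: "a \<noteq> 0" "B l a \<noteq> 0" by (simp_all add: B_def)
    define z where "z = x + y"
    have "(\<Sum>j\<le>D. (d j * B j a * (x^j + y^j - z^j)) * s^j) = 0" for s
    proof -
      have "(\<Sum>j\<le>D. (d j * B j a * (x^j + y^j - z^j)) * s^j)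
          = h a (s*x) + h a (s*y) - h a (s*z)"
        unfolding h[OF a(1)] B_def
        by (simp add: algebra_simps sum_subtractf sum.distrib power_mult_distrib)
      also have "\<dots> = 0" using add[OF a(1), of "s*x" "s*y"] by (simp add: distrib_left z_def)
      finally show ?thesis .
    qed
    from coeffs_vanishing_on_units[OF this l] a(2) show ?thesis by (simp add: z_def)
  qed simp
  have "poly (\<Sum>l\<le>D. monom (d l) l) x + poly (\<Sum>l\<le>D. monom (d l) l) y
          - poly (\<Sum>l\<le>D. monom (d l) l) (x + y) = (\<Sum>l\<le>D. d l * (x^l + y^l - (x+y)^l))"
    by (simp add: poly_sum poly_monom algebra_simps sum.distrib sum_subtractf)
  also have "\<dots> = 0" using monomial by (intro sum.neutral) simp
  finally show ?thesis .
qed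

lemma additive_cocycle_is_coboundary:
  fixes g :: "'k::alg_closed_field \<Rightarrow> 'k \<Rightarrow> 'k" and E F :: int
  assumes expand: "\<And>a t. a \<noteq> 0 \<Longrightarrow> g a t = (\<Sum>l\<le>D. poly (R l) a / a^m * t^l)"
  and coc: "\<And>a b t. a \<noteq> 0 \<Longrightarrow> b \<noteq> 0 \<Longrightarrow> g (a*b) t = a powi E * g b t + g a (b powi F * t)"
  and add: "\<And>a s t. a \<noteq> 0 \<Longrightarrow> g a (s + t) = g a s + g a t"
  shows "\<exists>f. (\<forall>x y. poly f x + poly f y - poly f (x + y) = 0) \<and>
             (\<forall>a t. a \<noteq> 0 \<longrightarrow> g a t = poly f (a powi F * t) - a powi E * poly f t)"
proof -
  have "\<forall>l\<in>{..D}. \<exists>d. (\<forall>a. a \<noteq> 0 \<longrightarrow> poly (R l) a / a^m = d * (a powi (F * int l) - a powi E)) \<and>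
                     (d \<noteq> 0 \<longrightarrow> (\<exists>a::'k. a \<noteq> 0 \<and> a powi (F * int l) \<noteq> a powi E))"
  proof
    fix l assume "l \<in> {..D}"
    then show "\<exists>d. (\<forall>a. a \<noteq> 0 \<longrightarrow> poly (R l) a / a^m = d * (a powi (F * int l) - a powi E)) \<and>
                     (d \<noteq> 0 \<longrightarrow> (\<exists>a::'k. a \<noteq> 0 \<and> a powi (F * int l) \<noteq> a powi E))"
      using coefficient_cocycle[OF expand coc, of _ _ l]
      by (intro laurent_twisted_cocycle_coboundary) auto
  qed
  then obtain d where d: "\<And>l a. l \<le> D \<Longrightarrow> a \<noteq> 0 \<Longrightarrow>
        poly (R l) a / a^m = d l * (a powi (F * int l) - a powi E)"
    and nondeg: "\<And>l. l \<le> D \<Longrightarrow> d l \<noteq> 0 \<Longrightarrow> \<exists>a::'k. a \<noteq> 0 \<and> a powi (F * int l) \<noteq> a powi E"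
    by (metis atMost_iff bchoice)
  define f where "f = (\<Sum>l\<le>D. monom (d l) l)"
  have g_d: "g a t = (\<Sum>l\<le>D. d l * (a powi (F * int l) - a powi E) * t^l)" if "a \<noteq> 0" for a t
    unfolding expand[OF that] by (intro sum.cong) (simp_all add: d that)
  have "g a t = poly f (a powi F * t) - a powi E * poly f t" if "a \<noteq> 0" for a t
    unfolding g_d[OF that] f_def
    by (simp add: poly_sum poly_monom power_mult_distrib power_int_power' algebra_simps
                  sum_subtractf sum_distrib_left)
  moreover have "poly f x + poly f y - poly f (x + y) = 0" for x y
    unfolding f_def using g_d add nondeg by (rule additive_of_additive_coboundary)
  ultimately show ?thesis by blast
qed

text \<open>On the axis, phi_1 satisfies the twisted cocycle identity: this is the first coordinate
  of the action law act(ab) = act(a) o act(b).\<close>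
lemma phi1_cocycle:
  assumes n2: "2 \<le> n"
  and act_bij: "\<And>a. a \<noteq> 0 \<Longrightarrow> bij_betw (act n e \<phi> a) (Uset n) (Uset n)"
  and act_mult: "\<And>a b x. a \<noteq> 0 \<Longrightarrow> b \<noteq> 0 \<Longrightarrow> x \<in> Uset n \<Longrightarrow>
                     act n e \<phi> (a * b) x = act n e \<phi> a (act n e \<phi> b x)"
  and g: "\<And>a x. a \<noteq> 0 \<Longrightarrow> x \<in> Uset n \<Longrightarrow> \<phi> 1 a x = g a (x n)"
  and a: "a \<noteq> 0" and b: "b \<noteq> 0"
  shows "g (a*b) t = a powi e 1 * g b t + g a (b powi e n * (t :: 'k::field))"
proof -
  have n1: "n \<noteq> 1" and x: "axis n t \<in> Uset n" using n2 by (auto intro: axis_in_Uset)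
  have act1: "act n e \<phi> a' y 1 = a' powi e 1 * y 1 + \<phi> 1 a' y" for a' y
    using n2 by (simp add: act_def)
  have y: "act n e \<phi> b (axis n t) \<in> Uset n" using bij_betw_apply[OF act_bij[OF b] x] .
  have "g (a*b) t = act n e \<phi> (a*b) (axis n t) 1"
    using act1 g[of "a*b"] a b x n1 by (simp add: axis_def)
  also have "\<dots> = act n e \<phi> a (act n e \<phi> b (axis n t)) 1" using act_mult[OF a b x] by simp
  also have "\<dots> = a powi e 1 * g b t + g a (b powi e n * t)"
    using act1 g[OF a y] g[OF b x] n1 n2 by (simp add: act_def axis_def)
  finally show ?thesis .
qed

lemma act_on_section:
  assumes n2: "2 \<le> n"
  and g: "\<And>x. x \<in> Uset n \<Longrightarrow> \<phi> 1 a x = g (x n)"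
  and phi_zero: "\<And>j x. 2 \<le> j \<Longrightarrow> j < n \<Longrightarrow> x \<in> Uset n \<Longrightarrow> \<phi> j a x = 0"
  and coboundary: "\<And>t. g t = poly f (a powi e n * t) - a powi e 1 * poly f t"
  shows "act n e \<phi> a (sect n f t) = sect n f (a powi e n * (t :: 'k::field))"
proof
  fix j
  have s: "sect n f t \<in> Uset n" using n2 by (auto simp: sect_def Uset_def)
  consider "j = 1" | "2 \<le> j \<and> j < n" | "j = 0 \<or> n \<le> j" by linarith
  then show "act n e \<phi> a (sect n f t) j = sect n f (a powi e n * t) j"
  proof cases
    case 1
    then show ?thesis using n2 g[OF s] coboundary[of t] by (simp add: act_def sect_def)
  next
    case 2
    then show ?thesis using phi_zero[OF _ _ s, of j] by (simp add: act_def sect_def)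
  next
    case 3
    then show ?thesis using n2 by (auto simp: act_def sect_def)
  qed
qed

theorem mainTheorem8:
  fixes n :: nat
    and \<psi> :: "nat \<Rightarrow> (nat \<Rightarrow> 'k::alg_closed_field) \<Rightarrow> (nat \<Rightarrow> 'k) \<Rightarrow> 'k"
    and e1 :: "nat \<Rightarrow> 'k"
    and e :: "nat \<Rightarrow> int"
    and \<phi> :: "nat \<Rightarrow> 'k \<Rightarrow> (nat \<Rightarrow> 'k) \<Rightarrow> 'k"
  assumes n2: "2 \<le> n"
    and psi_pol: "\<And>j. 1 \<le> j \<Longrightarrow> j < n \<Longrightarrow> psi_poly n j (\<psi> j)"
    and grp: "group (Ugrp n \<psi> e1)"
    and normal_sub: "\<And>i. i \<le> n \<Longrightarrow> Usub n i \<lhd> Ugrp n \<psi> e1"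
    and phi_reg: "\<And>j. 1 \<le> j \<Longrightarrow> j < n \<Longrightarrow> phi_regular n j (\<phi> j)"
    and act_hom: "\<And>a. a \<noteq> 0 \<Longrightarrow> act n e \<phi> a \<in> hom (Ugrp n \<psi> e1) (Ugrp n \<psi> e1)"
    and act_bij: "\<And>a. a \<noteq> 0 \<Longrightarrow> bij_betw (act n e \<phi> a) (Uset n) (Uset n)"
    and act_one: "\<And>x. x \<in> Uset n \<Longrightarrow> act n e \<phi> 1 x = x"
    and act_mult: "\<And>a b x. a \<noteq> 0 \<Longrightarrow> b \<noteq> 0 \<Longrightarrow> x \<in> Uset n \<Longrightarrow>
                     act n e \<phi> (a * b) x = act n e \<phi> a (act n e \<phi> b x)"
    and phi_zero: "\<And>a j x. a \<noteq> 0 \<Longrightarrow> 2 \<le> j \<Longrightarrow> j < n \<Longrightarrow> x \<in> Uset n \<Longrightarrow> \<phi> j a x = 0"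
    and phi1: "\<exists>g. \<forall>a. a \<noteq> 0 \<longrightarrow>
                 (\<forall>x \<in> Uset n. \<phi> 1 a x = g a (x n)) \<and> (\<forall>s t. g a (s + t) = g a s + g a t)"
  shows "\<exists>f :: 'k poly.
           (\<forall>x y. poly f x + poly f y - poly f (x + y) = 0) \<and>
           (\<forall>t. sect n f t \<in> Usub n n \<and> sect n f t n = t) \<and>
           (\<forall>a t. a \<noteq> 0 \<longrightarrow> act n e \<phi> a (sect n f t) \<in> range (sect n f))"
proof -
  obtain g where g: "\<And>a x. a \<noteq> 0 \<Longrightarrow> x \<in> Uset n \<Longrightarrow> \<phi> 1 a x = g a (x n)"
    and g_add: "\<And>a s t. a \<noteq> 0 \<Longrightarrow> g a (s + t) = g a s + g a t"
    using phi1 by blast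
  obtain R m D where R: "\<And>a t. a \<noteq> 0 \<Longrightarrow> \<phi> 1 a (axis n t) = (\<Sum>l\<le>D. poly (R l) a / a^m * t^l)"
    using phi_regular_on_axis[OF phi_reg[of 1]] n2 by auto
  have expand: "g a t = (\<Sum>l\<le>D. poly (R l) a / a^m * t^l)" if "a \<noteq> 0" for a t
    using g[OF that axis_in_Uset, of t] R[OF that, of t] n2 by (simp add: axis_def)
  obtain f where f_add: "\<forall>x y. poly f x + poly f y - poly f (x + y) = 0"
    and coboundary: "\<And>a t. a \<noteq> 0 \<Longrightarrow> g a t = poly f (a powi e n * t) - a powi e 1 * poly f t"
    using additive_cocycle_is_coboundary[OF expand phi1_cocycle[OF n2 act_bij act_mult g] g_add]
    by blast
  have "act n e \<phi> a (sect n f t) = sect n f (a powi e n * t)" if "a \<noteq> 0" for a t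
    using that g phi_zero coboundary by (intro act_on_section[OF n2])
  moreover have "sect n f t \<in> Usub n n \<and> sect n f t n = t" for t
    using n2 by (auto simp: sect_def Usub_def Uset_def)
  ultimately show ?thesis using f_add by auto
qed

end
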